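(* Let $\mathbb{K}$ be a positive commutative monoid and let $H$ be a hypergraph. If $H$ has the local-to-global consistency property for $\mathbb{K}$-relations, then for every subset $W$ of the set of vertices of $H$, the hypergraph $R(H[W])$ also has the local-to-global consistency property for $\mathbb{K}$-relations.
   Context: A commutative monoid $\mathbb{K}=(K,+,0)$ is positive if $p+q=0$ implies $p=q=0$. Attributes have domains; for a finite attribute set $X$, an $X$-tuple assigns each $A\in X$ a value in its domain; $t[Y]$ is restriction. A $\mathbb{K}$-relation over $X$ is a finitely supported function $R$ from $X$-tuples to $K$ (support $R'$); marginals are $R[Y](t)=\sum_{r\in R',r[Y]=t}R(r)$. For a hypergraph with hyperedges $X_1,\dots,X_m$ (vertices as attributes), a collection $R_1(X_1),\dots,R_m(X_m)$ is pairwise consistent if every two $R_i,R_j$ have a $\mathbb{K}$-relation $W$ over $X_i\cup X_j$ with $W[X_i]=R_i$, $W[X_j]=R_j$, and globally consistent if some $W$ over $X_1\cup\dots\cup X_m$ has $W[X_i]=R_i$ for all $i$. A hypergraph has the local-to-global consistency property for $\mathbb{K}$-relations if every pairwise consistent collection of $\mathbb{K}$-relations over its hyperedges is globally consistent. For $H=(V,E)$ and $W\subseteq V$, $H[W]$ is the hypergraph with vertex set $W$ and hyperedges the non-empty sets $X\cap W$, $X\in E$. The reduction $R(H)$ of a hypergraph $H$ has the same vertices and as hyperedges those hyperedges of $H$ not contained in any other hyperedge of $H$. *)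

theory Defs
  imports Main "HOL-Library.FuncSet"
begin

definition positive_monoid :: "'k::comm_monoid_add itself \<Rightarrow> bool" where
  "positive_monoid _ \<longleftrightarrow> (\<forall>p q::'k. p + q = 0 \<longrightarrow> p = 0 \<and> q = 0)"

definition tuples :: "('a \<Rightarrow> 'v set) \<Rightarrow> 'a set \<Rightarrow> ('a \<Rightarrow> 'v) set" where
  "tuples D X = PiE X D"

definition supp :: "(('a \<Rightarrow> 'v) \<Rightarrow> 'k::zero) \<Rightarrow> ('a \<Rightarrow> 'v) set" where
  "supp R = {t. R t \<noteq> 0}"

text \<open>A K-relation over X: finitely supported function from X-tuples to K
  (represented as a function on all of 'a => 'v that vanishes off the X-tuples).\<close>
definition is_krel :: "('a \<Rightarrow> 'v set) \<Rightarrow> 'a set \<Rightarrow> (('a \<Rightarrow> 'v) \<Rightarrow> 'k::zero) \<Rightarrow> bool" where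
  "is_krel D X R \<longleftrightarrow> finite (supp R) \<and> supp R \<subseteq> tuples D X"

definition marg :: "(('a \<Rightarrow> 'v) \<Rightarrow> 'k::comm_monoid_add) \<Rightarrow> 'a set \<Rightarrow> ('a \<Rightarrow> 'v) \<Rightarrow> 'k" where
  "marg R Y t = (\<Sum>r \<in> {r \<in> supp R. restrict r Y = t}. R r)"

type_synonym 'a hypergraph = "'a set \<times> 'a set set"

definition hypergraph :: "'a hypergraph \<Rightarrow> bool" where
  "hypergraph H \<longleftrightarrow> finite (fst H) \<and> (\<forall>X \<in> snd H. X \<noteq> {} \<and> X \<subseteq> fst H)"

text \<open>A collection of K-relations indexed by the hyperedges: Rs X is over X.\<close>
definition pairwise_consistent ::
  "('a \<Rightarrow> 'v set) \<Rightarrow> 'a set set \<Rightarrow> ('a set \<Rightarrow> ('a \<Rightarrow> 'v) \<Rightarrow> 'k::comm_monoid_add) \<Rightarrow> bool" where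
  "pairwise_consistent D E Rs \<longleftrightarrow>
     (\<forall>X \<in> E. \<forall>Y \<in> E. \<exists>W. is_krel D (X \<union> Y) W \<and> marg W X = Rs X \<and> marg W Y = Rs Y)"

definition globally_consistent ::
  "('a \<Rightarrow> 'v set) \<Rightarrow> 'a set set \<Rightarrow> ('a set \<Rightarrow> ('a \<Rightarrow> 'v) \<Rightarrow> 'k::comm_monoid_add) \<Rightarrow> bool" where
  "globally_consistent D E Rs \<longleftrightarrow>
     (\<exists>W. is_krel D (\<Union>E) W \<and> (\<forall>X \<in> E. marg W X = Rs X))"

definition local_to_global :: "'k::comm_monoid_add itself \<Rightarrow> 'v itself \<Rightarrow> 'a hypergraph \<Rightarrow> bool" where
  "local_to_global _ _ H \<longleftrightarrow>
     (\<forall>(D :: 'a \<Rightarrow> 'v set) (Rs :: 'a set \<Rightarrow> ('a \<Rightarrow> 'v) \<Rightarrow> 'k).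
        (\<forall>X \<in> snd H. is_krel D X (Rs X)) \<longrightarrow> pairwise_consistent D (snd H) Rs
        \<longrightarrow> globally_consistent D (snd H) Rs)"

definition induced :: "'a hypergraph \<Rightarrow> 'a set \<Rightarrow> 'a hypergraph" where
  "induced H W = (W, {X \<inter> W | X. X \<in> snd H \<and> X \<inter> W \<noteq> {}})"

definition reduction :: "'a hypergraph \<Rightarrow> 'a hypergraph" where
  "reduction H = (fst H, {X \<in> snd H. \<not> (\<exists>Y \<in> snd H. X \<subset> Y)})"

end

theory Submission
  imports Defs
begin

text \<open>Attributes outside \<open>W\<close> are given a one-element domain, so that \<open>K\<close>-relations over
  \<open>X \<inter> W\<close> become \<open>K\<close>-relations over \<open>X\<close>. A pairwise consistent family on the maximal traces
  \<open>X \<inter> W\<close> is extended to every hyperedge \<open>X\<close> of \<open>H\<close> by marginalising the relation of a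
  maximal trace containing \<open>X \<inter> W\<close>; the extension is again pairwise consistent, and
  marginalising a global witness for it back to the traces gives one for the original
  family.\<close>

lemma marg_eq_sum_superset:
  assumes "finite A" "supp R \<subseteq> A"
  shows "marg R Y t = (\<Sum>r \<in> {r \<in> A. restrict r Y = t}. R r)"
  unfolding marg_def
  by (rule sum.mono_neutral_left) (use assms in \<open>auto simp: supp_def\<close>)

lemma supp_marg_subset: "supp (marg R Y) \<subseteq> (\<lambda>r. restrict r Y) ` supp R"
proof
  fix s assume "s \<in> supp (marg R Y)"
  then have "marg R Y s \<noteq> 0" by (simp add: supp_def)
  then have "{r \<in> supp R. restrict r Y = s} \<noteq> {}" unfolding marg_def by force
  then show "s \<in> (\<lambda>r. restrict r Y) ` supp R" by blast
qed

lemma marg_marg: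
  assumes fin: "finite (supp R)" and "Y \<subseteq> Z"
  shows "marg (marg R Z) Y = marg R Y"
proof
  fix t
  have YZ: "Y \<inter> Z = Y" "Z \<inter> Y = Y" using \<open>Y \<subseteq> Z\<close> by auto
  let ?I = "(\<lambda>r. restrict r Z) ` supp R"
  have "marg (marg R Z) Y t = (\<Sum>s \<in> {s \<in> ?I. restrict s Y = t}. marg R Z s)"
    by (rule marg_eq_sum_superset) (use fin supp_marg_subset in auto)
  also have "\<dots> = (\<Sum>s \<in> {s \<in> ?I. restrict s Y = t}.
      sum R {r. r \<in> {r \<in> supp R. restrict r Y = t} \<and> restrict r Z = s})"
  proof (rule sum.cong[OF refl])
    fix s assume "s \<in> {s \<in> ?I. restrict s Y = t}"
    then have "restrict s Y = t" by auto
    then have "{r. r \<in> {r \<in> supp R. restrict r Y = t} \<and> restrict r Z = s}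
        = {r \<in> supp R. restrict r Z = s}"
      using \<open>Y \<subseteq> Z\<close> by (auto simp: restrict_restrict YZ)
    then show "marg R Z s = sum R {r. r \<in> {r \<in> supp R. restrict r Y = t} \<and> restrict r Z = s}"
      by (simp add: marg_def)
  qed
  also have "\<dots> = sum R {r \<in> supp R. restrict r Y = t}"
    by (rule sum.group) (use fin \<open>Y \<subseteq> Z\<close> in \<open>auto simp: restrict_restrict YZ\<close>)
  finally show "marg (marg R Z) Y t = marg R Y t" by (simp add: marg_def)
qed

lemma is_krel_marg:
  assumes "is_krel D Z R" "Y \<subseteq> Z"
  shows "is_krel D Y (marg R Y)"
proof -
  have "(\<lambda>r. restrict r Y) ` supp R \<subseteq> tuples D Y"
    using assms by (force simp: is_krel_def tuples_def PiE_def Pi_def)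
  with supp_marg_subset[of R Y] assms(1) show ?thesis
    by (auto simp: is_krel_def intro: finite_subset)
qed

lemma marg_Int_is_krel:
  assumes "is_krel D Z R"
  shows "marg R (X \<inter> Z) = marg R X"
proof
  fix t
  have "restrict r (X \<inter> Z) = restrict r X" if "r \<in> supp R" for r
    using assms that by (force simp: is_krel_def tuples_def PiE_def extensional_def restrict_def)
  then have "{r \<in> supp R. restrict r (X \<inter> Z) = t} = {r \<in> supp R. restrict r X = t}" by auto
  then show "marg R (X \<inter> Z) t = marg R X t" by (simp add: marg_def)
qed

lemma pairwise_consistent_marg_subset:
  assumes "pairwise_consistent D E Rs" "Y \<in> E" "Y' \<in> E" "Y \<subseteq> Y'"
  shows "marg (Rs Y') Y = Rs Y"
proof -
  obtain V where V: "is_krel D (Y \<union> Y') V" "marg V Y = Rs Y" "marg V Y' = Rs Y'"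
    using assms(1-3) unfolding pairwise_consistent_def by blast
  then have "finite (supp V)" by (simp add: is_krel_def)
  with V(2,3) \<open>Y \<subseteq> Y'\<close> show ?thesis by (metis marg_marg)
qed

definition domains_on :: "'a set \<Rightarrow> ('a \<Rightarrow> 'v set) \<Rightarrow> 'a \<Rightarrow> 'v set" where
  "domains_on W D a = (if a \<in> W then D a else {undefined})"

lemma is_krel_domains_on: "is_krel (domains_on W D) X R \<longleftrightarrow> is_krel D (X \<inter> W) R"
proof -
  have "tuples (domains_on W D) X = tuples D (X \<inter> W)"
    unfolding tuples_def PiE_def Pi_def extensional_def domains_on_def
    by (auto split: if_splits)
  then show ?thesis by (simp add: is_krel_def)
qed

lemma pairwise_consistent_domains_on_extension:
  assumes pc: "pairwise_consistent D E Rs"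
    and sel: "\<And>X. X \<in> F \<Longrightarrow> sel X \<in> E \<and> X \<inter> W \<subseteq> sel X"
  shows "pairwise_consistent (domains_on W D) F (\<lambda>X. marg (Rs (sel X)) (X \<inter> W))"
  unfolding pairwise_consistent_def
proof (intro ballI)
  fix X1 X2 assume X: "X1 \<in> F" "X2 \<in> F"
  obtain V where V: "is_krel D (sel X1 \<union> sel X2) V"
      "marg V (sel X1) = Rs (sel X1)" "marg V (sel X2) = Rs (sel X2)"
    using pc sel[OF X(1)] sel[OF X(2)] unfolding pairwise_consistent_def by blast
  have fin: "finite (supp V)" using V(1) by (simp add: is_krel_def)
  define U where "U = (X1 \<union> X2) \<inter> W"
  have U: "is_krel D U (marg V U)"
    unfolding U_def by (rule is_krel_marg[OF V(1)]) (use sel[OF X(1)] sel[OF X(2)] in auto)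
  have "marg (marg V U) X = marg (Rs (sel X)) (X \<inter> W)" if "X \<in> {X1, X2}" for X
  proof -
    have "X \<inter> W \<subseteq> sel X" using that sel X by auto
    have "marg (marg V U) X = marg (marg V U) (X \<inter> U)"
      by (rule marg_Int_is_krel[OF U, symmetric])
    also have "\<dots> = marg V (X \<inter> W)"
    proof -
      have "X \<inter> U = X \<inter> W" "X \<inter> W \<subseteq> U" using that by (auto simp: U_def)
      then show ?thesis by (simp add: marg_marg[OF fin])
    qed
    also have "\<dots> = marg (marg V (sel X)) (X \<inter> W)"
      by (rule marg_marg[OF fin \<open>X \<inter> W \<subseteq> sel X\<close>, symmetric])
    finally show ?thesis using that V by auto
  qed
  moreover have "is_krel (domains_on W D) (X1 \<union> X2) (marg V U)"
    using U by (simp add: is_krel_domains_on U_def)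
  ultimately show "\<exists>G. is_krel (domains_on W D) (X1 \<union> X2) G
      \<and> marg G X1 = marg (Rs (sel X1)) (X1 \<inter> W) \<and> marg G X2 = marg (Rs (sel X2)) (X2 \<inter> W)"
    by blast
qed

lemma local_to_global_traces:
  assumes l2g: "local_to_global TYPE('k::comm_monoid_add) TYPE('v) H"
    and traces: "\<And>Y. Y \<in> E \<Longrightarrow> \<exists>X \<in> snd H. Y = X \<inter> W"
    and covered: "\<And>X. X \<in> snd H \<Longrightarrow> \<exists>Y \<in> E. X \<inter> W \<subseteq> Y"
  shows "local_to_global TYPE('k) TYPE('v) (V, E)"
  unfolding local_to_global_def snd_conv
proof (intro allI impI)
  fix D :: "'a \<Rightarrow> 'v set" and Rs :: "'a set \<Rightarrow> ('a \<Rightarrow> 'v) \<Rightarrow> 'k"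
  assume krel: "\<forall>Y \<in> E. is_krel D Y (Rs Y)" and pc: "pairwise_consistent D E Rs"
  obtain sel where sel: "\<And>X. X \<in> snd H \<Longrightarrow> sel X \<in> E \<and> X \<inter> W \<subseteq> sel X"
    using covered by metis
  define Rs' where "Rs' X = marg (Rs (sel X)) (X \<inter> W)" for X
  have "\<forall>X \<in> snd H. is_krel (domains_on W D) X (Rs' X)"
    using is_krel_marg krel sel unfolding is_krel_domains_on Rs'_def by blast
  moreover have "pairwise_consistent (domains_on W D) (snd H) Rs'"
    unfolding Rs'_def by (rule pairwise_consistent_domains_on_extension[OF pc sel])
  ultimately have "globally_consistent (domains_on W D) (snd H) Rs'"
    using l2g unfolding local_to_global_def by blast
  then obtain G where G: "is_krel D (\<Union>(snd H) \<inter> W) G" "\<forall>X \<in> snd H. marg G X = Rs' X"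
    unfolding globally_consistent_def is_krel_domains_on by blast
  have fin: "finite (supp G)" using G(1) by (simp add: is_krel_def)
  show "globally_consistent D E Rs"
    unfolding globally_consistent_def
  proof (intro exI conjI ballI)
    show "is_krel D (\<Union>E) (marg G (\<Union>E))"
      by (rule is_krel_marg[OF G(1)]) (use traces in blast)
    fix Y assume "Y \<in> E"
    then obtain X where X: "X \<in> snd H" "Y = X \<inter> W" using traces by blast
    have "X \<inter> (\<Union>(snd H) \<inter> W) = Y" using X by auto
    then have "marg (marg G (\<Union>E)) Y = marg G (X \<inter> (\<Union>(snd H) \<inter> W))"
      using marg_marg[OF fin, of Y "\<Union>E"] \<open>Y \<in> E\<close> by auto
    also have "\<dots> = Rs' X" using marg_Int_is_krel[OF G(1)] G(2) X(1) by simp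
    also have "\<dots> = Rs Y"
      using pairwise_consistent_marg_subset[OF pc \<open>Y \<in> E\<close>] sel[OF X(1)] X(2)
      by (simp add: Rs'_def)
    finally show "marg (marg G (\<Union>E)) Y = Rs Y" .
  qed
qed

lemma local_to_global_no_edges:
  assumes "snd H = {}"
  shows "local_to_global TYPE('k::comm_monoid_add) TYPE('v) H"
proof -
  have "is_krel D {} (\<lambda>_. 0 :: 'k)" for D :: "'a \<Rightarrow> 'v set"
    by (simp add: is_krel_def supp_def)
  then show ?thesis using assms by (auto simp: local_to_global_def globally_consistent_def)
qed

lemma reduction_covers:
  assumes "finite (snd H)" "X \<in> snd H"
  shows "\<exists>Y \<in> snd (reduction H). X \<subseteq> Y"
proof -
  obtain Y where "Y \<in> snd H" "X \<subseteq> Y" "\<forall>Z \<in> snd H. Y \<subseteq> Z \<longrightarrow> Y = Z"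
    using finite_has_maximal2[OF assms] by blast
  then show ?thesis by (auto simp: reduction_def)
qed

lemma finite_edges_induced:
  assumes "hypergraph H"
  shows "finite (snd (induced H W))"
proof -
  have "finite (snd H)"
    using assms by (auto simp: hypergraph_def intro: finite_subset[of _ "Pow (fst H)"])
  then show ?thesis
    by (auto simp: induced_def intro: finite_subset[of _ "(\<lambda>X. X \<inter> W) ` snd H"])
qed

theorem corollary9:
  fixes H :: "'a hypergraph" and W :: "'a set"
  assumes "positive_monoid TYPE('k::comm_monoid_add)"
    and "hypergraph H"
    and "local_to_global TYPE('k) TYPE('v) H"
    and "W \<subseteq> fst H"
  shows "local_to_global TYPE('k) TYPE('v) (reduction (induced H W))"
proof (cases "snd (reduction (induced H W)) = {}")
  case True
  then show ?thesis by (rule local_to_global_no_edges)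
next
  case False
  let ?E = "snd (reduction (induced H W))"
  have "\<exists>Y \<in> ?E. X \<inter> W \<subseteq> Y" if "X \<in> snd H" for X
  proof (cases "X \<inter> W = {}")
    case False
    with that have "X \<inter> W \<in> snd (induced H W)" by (auto simp: induced_def)
    with reduction_covers finite_edges_induced[OF assms(2)] show ?thesis by blast
  qed (use \<open>?E \<noteq> {}\<close> in auto)
  moreover have "\<exists>X \<in> snd H. Y = X \<inter> W" if "Y \<in> ?E" for Y
    using that by (auto simp: reduction_def induced_def)
  moreover have "reduction (induced H W) = (W, ?E)"
    by (simp add: reduction_def induced_def)
  ultimately show ?thesis by (metis local_to_global_traces[OF assms(3)])
qed

end
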